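(* Let $G$ be a group and $\mathcal{F}$ a family of finite subgroups of $G$. The orbit category $\mathrm{Or}(G,\mathcal{F})$ satisfies the unique factorisation property if and only if every member of $\mathcal{F}$ is a cyclic group of prime power order (different primes may occur for different members).
   Context: A family of subgroups is a non-empty set of subgroups closed under conjugation and passing to subgroups. $\mathrm{Or}(G,\mathcal{F})$ has objects $G/H$, $H\in\mathcal{F}$, and morphisms all $G$-equivariant maps; each morphism $G/H\to G/K$ is $\phi(g)\colon xH\mapsto xg^{-1}K$ for some $g$ with $gHg^{-1}\subseteq K$, unique modulo left multiplication by $K$. A morphism is unfactorisable if it is not an isomorphism and whenever $f=gh$ one of $g,h$ is an isomorphism. A category satisfies the unique factorisation property if for any two chains $x=x_0\xrightarrow{\alpha_1}\cdots\xrightarrow{\alpha_n}x_n=y$ and $x=x'_0\xrightarrow{\alpha'_1}\cdots\xrightarrow{\alpha'_{n'}}x'_{n'}=y$ of unfactorisable morphisms with equal composites, $n=n'$ and there are isomorphisms $h_i\colon x_i\to x'_i$ ($1\le i\le n-1$) with $h_1\alpha_1=\alpha'_1$, $\alpha'_nh_{n-1}=\alpha_n$ and $\alpha'_ih_{i-1}=h_i\alpha_i$ for $2\le i\le n-1$. *)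

theory Defs
  imports "HOL-Algebra.Algebra" "HOL-Computational_Algebra.Primes"
begin

definition subgroup_family :: "('g, 'b) monoid_scheme \<Rightarrow> 'g set set \<Rightarrow> bool" where
  "subgroup_family G F \<longleftrightarrow>
     F \<noteq> {} \<and> (\<forall>H\<in>F. subgroup H G) \<and>
     (\<forall>H\<in>F. \<forall>g\<in>carrier G. (g <#\<^bsub>G\<^esub> H) #>\<^bsub>G\<^esub> inv\<^bsub>G\<^esub> g \<in> F) \<and>
     (\<forall>H\<in>F. \<forall>K. subgroup K G \<and> K \<subseteq> H \<longrightarrow> K \<in> F)"

definition coset_space :: "('g, 'b) monoid_scheme \<Rightarrow> 'g set \<Rightarrow> 'g set set" where
  "coset_space G H = {x <#\<^bsub>G\<^esub> H | x. x \<in> carrier G}"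

definition orb_hom :: "('g, 'b) monoid_scheme \<Rightarrow> 'g set \<Rightarrow> 'g set \<Rightarrow> ('g set \<Rightarrow> 'g set) \<Rightarrow> bool" where
  "orb_hom G H K f \<longleftrightarrow>
     f \<in> coset_space G H \<rightarrow> coset_space G K \<and> f \<in> extensional (coset_space G H) \<and>
     (\<forall>g\<in>carrier G. \<forall>C\<in>coset_space G H. f (g <#\<^bsub>G\<^esub> C) = g <#\<^bsub>G\<^esub> f C)"

definition orb_id :: "('g, 'b) monoid_scheme \<Rightarrow> 'g set \<Rightarrow> ('g set \<Rightarrow> 'g set)" where
  "orb_id G H = (\<lambda>C\<in>coset_space G H. C)"

definition orb_comp :: "('g, 'b) monoid_scheme \<Rightarrow> 'g set \<Rightarrow> ('g set \<Rightarrow> 'g set) \<Rightarrow> ('g set \<Rightarrow> 'g set) \<Rightarrow> ('g set \<Rightarrow> 'g set)" where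
  "orb_comp G H g f = compose (coset_space G H) g f"

definition orb_iso :: "('g, 'b) monoid_scheme \<Rightarrow> 'g set \<Rightarrow> 'g set \<Rightarrow> ('g set \<Rightarrow> 'g set) \<Rightarrow> bool" where
  "orb_iso G H K f \<longleftrightarrow> orb_hom G H K f \<and>
     (\<exists>f'. orb_hom G K H f' \<and> orb_comp G H f' f = orb_id G H \<and> orb_comp G K f f' = orb_id G K)"

definition orb_unfactorisable :: "('g, 'b) monoid_scheme \<Rightarrow> 'g set set \<Rightarrow> 'g set \<Rightarrow> 'g set \<Rightarrow> ('g set \<Rightarrow> 'g set) \<Rightarrow> bool" where
  "orb_unfactorisable G F H K f \<longleftrightarrow> orb_hom G H K f \<and> \<not> orb_iso G H K f \<and>
     (\<forall>L\<in>F. \<forall>h g. orb_hom G H L h \<and> orb_hom G L K g \<and> orb_comp G H g h = f \<longrightarrow>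
        orb_iso G H L h \<or> orb_iso G L K g)"

text \<open>A chain x = x_0 \<rightarrow> x_1 \<rightarrow> ... \<rightarrow> x_n = y of unfactorisable morphisms:
  objs = [x_0,...,x_n], ms = [\<alpha>_1,...,\<alpha>_n], with \<alpha>_(i+1) = ms!i : objs!i \<rightarrow> objs!(i+1).\<close>
definition orb_chain :: "('g, 'b) monoid_scheme \<Rightarrow> 'g set set \<Rightarrow> 'g set \<Rightarrow> 'g set \<Rightarrow> 'g set list \<Rightarrow> ('g set \<Rightarrow> 'g set) list \<Rightarrow> bool" where
  "orb_chain G F x y objs ms \<longleftrightarrow>
     length objs = Suc (length ms) \<and> objs ! 0 = x \<and> objs ! length ms = y \<and>
     set objs \<subseteq> F \<and>
     (\<forall>i<length ms. orb_unfactorisable G F (objs ! i) (objs ! Suc i) (ms ! i))"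

definition orb_chain_comp :: "('g, 'b) monoid_scheme \<Rightarrow> 'g set \<Rightarrow> ('g set \<Rightarrow> 'g set) list \<Rightarrow> ('g set \<Rightarrow> 'g set)" where
  "orb_chain_comp G x ms = restrict (foldl (\<lambda>acc m. m \<circ> acc) id ms) (coset_space G x)"

text \<open>Isomorphisms h_i : x_i \<rightarrow> x'_i are indexed
  0..n with h_0 = id_x and h_n = id_y, and required to satisfy \<alpha>'_i h_(i-1) = h_i \<alpha>_i
  for 1 \<le> i \<le> n (this packages the three conditions of the definition).\<close>
definition orbit_category_ufp :: "('g, 'b) monoid_scheme \<Rightarrow> 'g set set \<Rightarrow> bool" where
  "orbit_category_ufp G F \<longleftrightarrow>
     (\<forall>x\<in>F. \<forall>y\<in>F. \<forall>objs ms objs' ms'.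
        orb_chain G F x y objs ms \<and> orb_chain G F x y objs' ms' \<and>
        orb_chain_comp G x ms = orb_chain_comp G x ms' \<longrightarrow>
        length ms = length ms' \<and>
        (\<exists>hs. length hs = length objs \<and>
              hs ! 0 = orb_id G x \<and> hs ! length ms = orb_id G y \<and>
              (\<forall>i\<le>length ms. orb_iso G (objs ! i) (objs' ! i) (hs ! i)) \<and>
              (\<forall>i<length ms. orb_comp G (objs ! i) (ms' ! i) (hs ! i) =
                             orb_comp G (objs ! i) (hs ! Suc i) (ms ! i))))"

end

theory Submission
  imports Defs
begin

text \<open>
  Every morphism \<open>G/H \<rightarrow> G/K\<close> is \<open>\<phi>(g)\<close> for some \<open>g\<close> with \<open>gHg\<^sup>-\<^sup>1 \<subseteq> K\<close>, and it is
  unfactorisable exactly when \<open>gHg\<^sup>-\<^sup>1\<close> is a maximal subgroup of \<open>K\<close>.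

  If every member of \<open>F\<close> is cyclic of prime power order, a maximal subgroup of a member has
  prime index, and this prime divides \<open>|y| = p\<^sup>k\<close>; hence every chain of unfactorisable
  morphisms from \<open>x\<close> to \<open>y\<close> has the length \<open>n\<close> with \<open>|y| = |x| p\<^sup>n\<close>. For two such chains
  with equal composites, the partial composites move their \<open>i\<close>-th objects onto subgroups of
  the cyclic group \<open>y\<close> of equal order, hence onto the same subgroup; as \<open>y\<close> is abelian, the
  element of \<open>y\<close> by which the two composites differ centralises these subgroups, and the
  resulting conjugating elements give the isomorphisms \<open>h\<^sub>i\<close>.

  Conversely, a finite group \<open>K\<close> that is not cyclic of prime power order has two distinct
  maximal subgroups \<open>M\<close> and \<open>M'\<close>. Maximal chains of inclusions \<open>1 \<subset> \<dots> \<subset> M \<subset> K\<close> and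
  \<open>1 \<subset> \<dots> \<subset> M' \<subset> K\<close> give two factorisations of \<open>G/1 \<rightarrow> G/K\<close>; isomorphisms \<open>h\<^sub>i\<close> between
  them must map the base coset of each object to the base coset of the other, which forces the
  two chains, and so \<open>M\<close> and \<open>M'\<close>, to coincide.
\<close>

section \<open>Cosets and conjugate subgroups\<close>

definition conj_set :: "('g, 'b) monoid_scheme \<Rightarrow> 'g \<Rightarrow> 'g set \<Rightarrow> 'g set" where
  "conj_set G g A = (\<lambda>a. g \<otimes>\<^bsub>G\<^esub> a \<otimes>\<^bsub>G\<^esub> inv\<^bsub>G\<^esub> g) ` A"

context group
begin

lemma inv_m_cancel_left [simp]: "x \<in> carrier G \<Longrightarrow> y \<in> carrier G \<Longrightarrow> inv x \<otimes> (x \<otimes> y) = y"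
  by (simp add: m_assoc[symmetric])

lemma m_inv_cancel_left [simp]: "x \<in> carrier G \<Longrightarrow> y \<in> carrier G \<Longrightarrow> x \<otimes> (inv x \<otimes> y) = y"
  by (simp add: m_assoc[symmetric])

lemma l_coset_eq_iff:
  assumes K: "subgroup K G" and a: "a \<in> carrier G" and b: "b \<in> carrier G"
  shows "a <# K = b <# K \<longleftrightarrow> inv a \<otimes> b \<in> K"
proof
  assume "a <# K = b <# K"
  then have "b \<in> a <# K"
    using lcos_self[OF b K] by simp
  then show "inv a \<otimes> b \<in> K"
    using subgroup.lcos_module_imp[OF K is_group a] by blast
next
  assume "inv a \<otimes> b \<in> K"
  then have "b \<in> a <# K"
    using subgroup.lcos_module_rev[OF K is_group a b] by blast
  then show "a <# K = b <# K"
    using l_repr_independence[OF _ a K] by blast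
qed

lemma l_coset_one: "subgroup K G \<Longrightarrow> \<one> <# K = K"
  by (simp add: lcos_mult_one subgroup.subset)

lemma l_coset_subgroup_self: "subgroup K G \<Longrightarrow> k \<in> K \<Longrightarrow> k <# K = K"
  using l_coset_eq_iff[of K k \<one>] l_coset_one subgroup.mem_carrier subgroup.m_inv_closed
  by fastforce

lemma l_coset_in_coset_space: "a \<in> carrier G \<Longrightarrow> a <# K \<in> coset_space G K"
  unfolding coset_space_def by blast

lemma subgroup_in_coset_space: "subgroup K G \<Longrightarrow> K \<in> coset_space G K"
  using l_coset_in_coset_space[of \<one> K] l_coset_one by simp

lemma coset_spaceE:
  assumes "C \<in> coset_space G H"
  obtains a where "a \<in> carrier G" "C = a <# H"
  using assms unfolding coset_space_def by blast

lemma card_subgroup_dvd: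
  assumes "subgroup A G" "subgroup K G" "A \<subseteq> K" "finite K"
  shows "card A dvd card K"
proof -
  interpret K: group "G\<lparr>carrier := K\<rparr>"
    using subgroup.subgroup_is_group[OF assms(2) is_group] .
  have "card (rcosets\<^bsub>G\<lparr>carrier := K\<rparr>\<^esub> A) * card A = card K"
    using K.lagrange[OF subgroup_incl[OF assms(1-3)]] unfolding order_def by simp
  then show ?thesis
    by (metis dvd_triv_right)
qed

lemma conj_set_mult:
  assumes g: "g \<in> carrier G" and h: "h \<in> carrier G" and A: "A \<subseteq> carrier G"
  shows "conj_set G (g \<otimes> h) A = conj_set G g (conj_set G h A)"
  unfolding conj_set_def image_image
proof (rule image_cong[OF refl])
  fix a assume "a \<in> A"
  then have "a \<in> carrier G" using A by blast
  then show "g \<otimes> h \<otimes> a \<otimes> inv (g \<otimes> h) = g \<otimes> (h \<otimes> a \<otimes> inv h) \<otimes> inv g"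
    using g h by (simp add: inv_mult_group m_assoc)
qed

lemma conj_set_one: "A \<subseteq> carrier G \<Longrightarrow> conj_set G \<one> A = A"
  unfolding conj_set_def by (auto simp: subsetD)

lemma conj_set_inv: "g \<in> carrier G \<Longrightarrow> A \<subseteq> carrier G \<Longrightarrow> conj_set G (inv g) (conj_set G g A) = A"
  using conj_set_mult[of "inv g" g A] conj_set_one by simp

lemma conj_set_mono: "A \<subseteq> B \<Longrightarrow> conj_set G g A \<subseteq> conj_set G g B"
  unfolding conj_set_def by auto

lemma conj_set_eq_cosets: "conj_set G g A = (g <# A) #> inv g"
  unfolding conj_set_def l_coset_def r_coset_def by auto

lemma subgroup_conj_set: "subgroup A G \<Longrightarrow> g \<in> carrier G \<Longrightarrow> subgroup (conj_set G g A) G"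
  using subgroup_conjugation_is_surj2 by (simp add: conj_set_eq_cosets)

lemma card_conj_set:
  assumes "g \<in> carrier G" "A \<subseteq> carrier G"
  shows "card (conj_set G g A) = card A"
  unfolding conj_set_def using assms
  by (intro card_image inj_onI) (auto simp: subsetD)

lemma conj_set_subgroup_self:
  assumes K: "subgroup K G" and g: "g \<in> K"
  shows "conj_set G g K = K"
proof -
  have sub: "conj_set G h K \<subseteq> K" if "h \<in> K" for h
    unfolding conj_set_def using K that by (auto intro: subgroup.m_closed subgroup.m_inv_closed)
  have "K = conj_set G g (conj_set G (inv g) K)"
    using conj_set_inv[of "inv g" K] K g subgroup.subset subgroup.mem_carrier by fastforce
  also have "\<dots> \<subseteq> conj_set G g K"
    using conj_set_mono sub subgroup.m_inv_closed[OF K g] by blast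
  finally show ?thesis
    using sub[OF g] by blast
qed

lemma conj_set_commuting:
  assumes "u \<in> carrier G" "Y \<subseteq> carrier G" "\<And>a. a \<in> Y \<Longrightarrow> u \<otimes> a = a \<otimes> u"
  shows "conj_set G u Y = Y"
proof -
  have "u \<otimes> a \<otimes> inv u = a" if "a \<in> Y" for a
    using assms that by (simp add: subsetD m_assoc)
  then show ?thesis
    unfolding conj_set_def by force
qed

end

section \<open>Morphisms of orbit categories\<close>

text \<open>The morphism \<open>\<phi>(g) : xH \<mapsto> xg\<^sup>-\<^sup>1K\<close>; the union over the coset avoids choosing a
  representative.\<close>
definition orb_map :: "('g, 'b) monoid_scheme \<Rightarrow> 'g set \<Rightarrow> 'g set \<Rightarrow> 'g \<Rightarrow> 'g set \<Rightarrow> 'g set" where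
  "orb_map G H K g = (\<lambda>C\<in>coset_space G H. \<Union>c\<in>C. (c \<otimes>\<^bsub>G\<^esub> inv\<^bsub>G\<^esub> g) <#\<^bsub>G\<^esub> K)"

context group
begin

lemma coset_space_fun_eqI:
  assumes "f \<in> extensional (coset_space G H)" "f' \<in> extensional (coset_space G H)"
    and "\<And>a. a \<in> carrier G \<Longrightarrow> f (a <# H) = f' (a <# H)"
  shows "f = f'"
  using assms by (intro extensionalityI) (auto elim!: coset_spaceE)

lemma orb_map_extensional: "orb_map G H K g \<in> extensional (coset_space G H)"
  unfolding orb_map_def by simp

lemma orb_map_apply:
  assumes H: "subgroup H G" and K: "subgroup K G" and g: "g \<in> carrier G"
    and gHK: "conj_set G g H \<subseteq> K" and a: "a \<in> carrier G"
  shows "orb_map G H K g (a <# H) = (a \<otimes> inv g) <# K"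
proof -
  have "(c \<otimes> inv g) <# K = (a \<otimes> inv g) <# K" if c: "c \<in> a <# H" for c
  proof -
    obtain h where h: "h \<in> H" "c = a \<otimes> h"
      using c unfolding l_coset_def by auto
    have hc: "h \<in> carrier G"
      using subgroup.mem_carrier[OF H h(1)] .
    have "inv (a \<otimes> inv g) \<otimes> (c \<otimes> inv g) = g \<otimes> h \<otimes> inv g"
      using a g hc h(2) by (simp add: inv_mult_group m_assoc)
    also have "\<dots> \<in> K"
      using gHK h(1) unfolding conj_set_def by blast
    finally show ?thesis
      using l_coset_eq_iff[OF K, of "a \<otimes> inv g" "c \<otimes> inv g"] a g hc h(2) by simp
  qed
  moreover have "a <# H \<noteq> {}"
    using lcos_self[OF a H] by blast
  ultimately show ?thesis
    unfolding orb_map_def using l_coset_in_coset_space[OF a] by simp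
qed

lemma orb_hom_orb_map:
  assumes H: "subgroup H G" and K: "subgroup K G" and g: "g \<in> carrier G"
    and gHK: "conj_set G g H \<subseteq> K"
  shows "orb_hom G H K (orb_map G H K g)"
proof -
  note apply_map = orb_map_apply[OF H K g gHK]
  have "orb_map G H K g (b <# C) = b <# orb_map G H K g C"
    if b: "b \<in> carrier G" and "C \<in> coset_space G H" for b C
  proof -
    obtain a where a: "a \<in> carrier G" "C = a <# H"
      using \<open>C \<in> coset_space G H\<close> by (rule coset_spaceE)
    have "orb_map G H K g (b <# C) = (b \<otimes> a \<otimes> inv g) <# K"
      using apply_map[of "b \<otimes> a"] lcos_m_assoc[OF subgroup.subset[OF H] b a(1)] a b by simp
    also have "\<dots> = b <# orb_map G H K g C"
      using apply_map[OF a(1)] lcos_m_assoc[OF subgroup.subset[OF K] b, of "a \<otimes> inv g"] a b g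
      by (simp add: m_assoc)
    finally show ?thesis .
  qed
  moreover have "orb_map G H K g \<in> coset_space G H \<rightarrow> coset_space G K"
    using apply_map l_coset_in_coset_space g by (auto elim!: coset_spaceE)
  ultimately show ?thesis
    unfolding orb_hom_def using orb_map_extensional by blast
qed

lemma orb_homE:
  assumes H: "subgroup H G" and K: "subgroup K G" and f: "orb_hom G H K f"
  obtains g where "g \<in> carrier G" "conj_set G g H \<subseteq> K" "f = orb_map G H K g"
proof -
  have equivariant: "\<And>b C. b \<in> carrier G \<Longrightarrow> C \<in> coset_space G H \<Longrightarrow> f (b <# C) = b <# f C"
    using f unfolding orb_hom_def by blast
  have "f H \<in> coset_space G K"
    using f subgroup_in_coset_space[OF H] unfolding orb_hom_def by blast
  then obtain z where z: "z \<in> carrier G" "f H = z <# K"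
    by (rule coset_spaceE)
  have f_apply: "f (a <# H) = (a \<otimes> z) <# K" if a: "a \<in> carrier G" for a
    using equivariant[OF a subgroup_in_coset_space[OF H]] z lcos_m_assoc[OF subgroup.subset[OF K] a z(1)]
    by simp
  have zHK: "conj_set G (inv z) H \<subseteq> K"
  proof
    fix x assume "x \<in> conj_set G (inv z) H"
    then obtain h where h: "h \<in> H" "x = inv z \<otimes> h \<otimes> z"
      unfolding conj_set_def using z by auto
    have hc: "h \<in> carrier G"
      using subgroup.mem_carrier[OF H h(1)] .
    have "(h \<otimes> z) <# K = z <# K"
      using f_apply[OF hc] z l_coset_subgroup_self[OF H h(1)] by simp
    then show "x \<in> K"
      using l_coset_eq_iff[OF K z(1), of "h \<otimes> z"] h(2) hc z by (simp add: m_assoc)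
  qed
  have "f = orb_map G H K (inv z)"
    using f orb_map_extensional f_apply orb_map_apply[OF H K _ zHK] z
    by (intro coset_space_fun_eqI) (auto simp: orb_hom_def)
  with zHK z show ?thesis
    using that by blast
qed

lemma orb_map_eq_iff:
  assumes H: "subgroup H G" and K: "subgroup K G" and g: "g \<in> carrier G" and g': "g' \<in> carrier G"
    and gHK: "conj_set G g H \<subseteq> K" and g'HK: "conj_set G g' H \<subseteq> K"
  shows "orb_map G H K g = orb_map G H K g' \<longleftrightarrow> g \<otimes> inv g' \<in> K"
proof -
  have "(a \<otimes> inv g) <# K = (a \<otimes> inv g') <# K \<longleftrightarrow> g \<otimes> inv g' \<in> K" if a: "a \<in> carrier G" for a
  proof -
    have "inv (a \<otimes> inv g) \<otimes> (a \<otimes> inv g') = g \<otimes> inv g'"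
      using a g g' by (simp add: inv_mult_group m_assoc)
    then show ?thesis
      using l_coset_eq_iff[OF K, of "a \<otimes> inv g" "a \<otimes> inv g'"] a g g' by simp
  qed
  then show ?thesis
    using orb_map_apply[OF H K g gHK] orb_map_apply[OF H K g' g'HK]
      coset_space_fun_eqI[OF orb_map_extensional orb_map_extensional]
    by (metis one_closed l_one)
qed

lemma orb_comp_orb_map:
  assumes H: "subgroup H G" and K: "subgroup K G" and L: "subgroup L G"
    and a: "a \<in> carrier G" and b: "b \<in> carrier G"
    and aHK: "conj_set G a H \<subseteq> K" and bKL: "conj_set G b K \<subseteq> L"
  shows "conj_set G (b \<otimes> a) H \<subseteq> L"
    and "orb_comp G H (orb_map G K L b) (orb_map G H K a) = orb_map G H L (b \<otimes> a)"
proof -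
  show baHL: "conj_set G (b \<otimes> a) H \<subseteq> L"
    using conj_set_mult[OF b a subgroup.subset[OF H]] conj_set_mono[OF aHK, of b] bKL by simp
  have pointwise: "orb_map G K L b (orb_map G H K a (c <# H)) = orb_map G H L (b \<otimes> a) (c <# H)"
    if c: "c \<in> carrier G" for c
    using orb_map_apply[OF H K a aHK c] orb_map_apply[OF K L b bKL, of "c \<otimes> inv a"]
      orb_map_apply[OF H L _ baHL c] a b c
    by (simp add: inv_mult_group m_assoc)
  show "orb_comp G H (orb_map G K L b) (orb_map G H K a) = orb_map G H L (b \<otimes> a)"
    unfolding orb_comp_def
    by (rule coset_space_fun_eqI[OF compose_extensional orb_map_extensional])
      (simp add: compose_eq[OF l_coset_in_coset_space] pointwise)
qed

lemma orb_map_square: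
  assumes H: "subgroup H G" and K: "subgroup K G" and H': "subgroup H' G" and K': "subgroup K' G"
    and a: "a \<in> carrier G" "conj_set G a H \<subseteq> K" and b: "b \<in> carrier G" "conj_set G b H' \<subseteq> K'"
    and c: "c \<in> carrier G" "conj_set G c H \<subseteq> H'" and d: "d \<in> carrier G" "conj_set G d K \<subseteq> K'"
    and "b \<otimes> c = d \<otimes> a"
  shows "orb_comp G H (orb_map G H' K' b) (orb_map G H H' c) = orb_comp G H (orb_map G K K' d) (orb_map G H K a)"
  using orb_comp_orb_map(2)[OF H H' K' c(1) b(1) c(2) b(2)] orb_comp_orb_map(2)[OF H K K' a(1) d(1) a(2) d(2)]
    \<open>b \<otimes> c = d \<otimes> a\<close> by simp

lemma orb_id_eq_orb_map_one:
  assumes H: "subgroup H G"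
  shows "orb_id G H = orb_map G H H \<one>"
  unfolding orb_id_def
  using orb_map_apply[OF H H one_closed] conj_set_one[OF subgroup.subset[OF H]]
  by (intro coset_space_fun_eqI[OF restrict_extensional orb_map_extensional])
    (simp add: l_coset_in_coset_space)

lemma orb_map_self_eq_orb_id:
  assumes H: "subgroup H G" and c: "c \<in> H"
  shows "orb_map G H H c = orb_id G H"
proof -
  have "c \<in> carrier G" "conj_set G c H \<subseteq> H"
    using subgroup.mem_carrier[OF H c] conj_set_subgroup_self[OF H c] by auto
  then show ?thesis
    using orb_map_eq_iff[OF H H _ one_closed] orb_id_eq_orb_map_one[OF H] c
      conj_set_one[OF subgroup.subset[OF H]] by simp
qed

lemma orb_iso_orb_map:
  assumes H: "subgroup H G" and K: "subgroup K G" and g: "g \<in> carrier G"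
    and gHK: "conj_set G g H = K"
  shows "orb_iso G H K (orb_map G H K g)"
proof -
  have gKH: "conj_set G (inv g) K = H"
    using conj_set_inv[OF g subgroup.subset[OF H]] gHK by simp
  have "orb_comp G H (orb_map G K H (inv g)) (orb_map G H K g) = orb_id G H"
    using orb_comp_orb_map(2)[OF H K H g inv_closed[OF g]] gHK gKH g orb_id_eq_orb_map_one[OF H]
    by simp
  moreover have "orb_comp G K (orb_map G H K g) (orb_map G K H (inv g)) = orb_id G K"
    using orb_comp_orb_map(2)[OF K H K inv_closed[OF g] g] gHK gKH g orb_id_eq_orb_map_one[OF K]
    by simp
  ultimately show ?thesis
    unfolding orb_iso_def using orb_hom_orb_map H K g gHK gKH by blast
qed

lemma orb_iso_orb_map_of_card_eq:
  assumes H: "subgroup H G" and K: "subgroup K G" and "finite K"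
    and g: "g \<in> carrier G" and gHK: "conj_set G g H \<subseteq> K" and "card H = card K"
  shows "orb_iso G H K (orb_map G H K g)"
  using orb_iso_orb_map[OF H K g] card_subset_eq[OF \<open>finite K\<close> gHK] \<open>card H = card K\<close>
    card_conj_set[OF g subgroup.subset[OF H]] by simp

lemma card_dvd_of_orb_hom:
  assumes H: "subgroup H G" and K: "subgroup K G" and "orb_hom G H K f" and "finite K"
  shows "card H dvd card K"
proof -
  obtain g where g: "g \<in> carrier G" "conj_set G g H \<subseteq> K"
    using orb_homE[OF H K \<open>orb_hom G H K f\<close>] by metis
  show ?thesis
    using card_subgroup_dvd[OF subgroup_conj_set[OF H g(1)] K g(2) \<open>finite K\<close>]
      card_conj_set[OF g(1) subgroup.subset[OF H]] by simp
qed

lemma card_eq_of_orb_iso: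
  assumes "subgroup H G" "subgroup K G" "orb_iso G H K f" "finite H" "finite K"
  shows "card H = card K"
  using assms card_dvd_of_orb_hom unfolding orb_iso_def by (blast intro: dvd_antisym)

lemma subset_of_orb_hom_base:
  assumes H: "subgroup H G" and K: "subgroup K G" and f: "orb_hom G H K f" and fH: "f H = K"
  shows "H \<subseteq> K"
proof -
  obtain c where c: "c \<in> carrier G" "conj_set G c H \<subseteq> K" "f = orb_map G H K c"
    using orb_homE[OF H K f] .
  have "inv c <# K = \<one> <# K"
    using orb_map_apply[OF H K c(1,2) one_closed] fH c l_coset_one[OF H] l_coset_one[OF K] by simp
  then have "inv c \<in> K"
    using l_coset_eq_iff[OF K inv_closed[OF c(1)] one_closed] c(1) subgroup.m_inv_closed[OF K]
    by fastforce
  have "H = conj_set G (inv c) (conj_set G c H)"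
    using conj_set_inv[OF c(1) subgroup.subset[OF H]] by simp
  also have "\<dots> \<subseteq> conj_set G (inv c) K"
    using conj_set_mono[OF c(2)] .
  also have "\<dots> = K"
    using conj_set_subgroup_self[OF K \<open>inv c \<in> K\<close>] .
  finally show ?thesis .
qed

lemma eq_of_orb_iso_base:
  assumes H: "subgroup H G" and K: "subgroup K G" and f: "orb_iso G H K f" and fH: "f H = K"
  shows "H = K"
proof -
  obtain f' where f: "orb_hom G H K f" and f': "orb_hom G K H f'"
    and inverse: "orb_comp G H f' f = orb_id G H"
    using f unfolding orb_iso_def by blast
  have "f' K = H"
    using fun_cong[OF inverse, of H] fH subgroup_in_coset_space[OF H]
    by (simp add: orb_comp_def orb_id_def compose_eq)
  then show ?thesis
    using subset_of_orb_hom_base[OF H K f fH] subset_of_orb_hom_base[OF K H f'] by blast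
qed

lemma orb_map_one_base:
  assumes "subgroup H G" "subgroup K G" "H \<subseteq> K"
  shows "orb_map G H K \<one> H = K"
  using orb_map_apply[OF assms(1,2) one_closed _ one_closed] conj_set_one assms
    l_coset_one[OF assms(1)] l_coset_one[OF assms(2)] subgroup.subset
  by (metis inv_one r_one one_closed)

lemma conj_set_between_of_factorisation:
  assumes H: "subgroup H G" and K: "subgroup K G" and L: "subgroup L G" and "H \<subseteq> K"
    and a: "a \<in> carrier G" "conj_set G a H \<subseteq> L" and b: "b \<in> carrier G" "conj_set G b L \<subseteq> K"
    and factor: "orb_comp G H (orb_map G L K b) (orb_map G H L a) = orb_map G H K \<one>"
  shows "H \<subseteq> conj_set G (inv a) L" and "conj_set G (inv a) L \<subseteq> K"
proof -
  show "H \<subseteq> conj_set G (inv a) L"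
    using conj_set_mono[OF a(2), of "inv a"] conj_set_inv[OF a(1) subgroup.subset[OF H]] by simp
  have "b \<otimes> a \<in> K"
    using factor orb_comp_orb_map[OF H L K a(1) b(1) a(2) b(2)] orb_map_eq_iff[OF H K _ one_closed]
      conj_set_one[OF subgroup.subset[OF H]] \<open>H \<subseteq> K\<close> a(1) b(1) by simp
  have "inv a = inv (b \<otimes> a) \<otimes> b"
    using a b by (simp add: inv_mult_group m_assoc)
  then have "conj_set G (inv a) L = conj_set G (inv (b \<otimes> a)) (conj_set G b L)"
    using conj_set_mult[OF inv_closed[OF m_closed[OF b(1) a(1)]] b(1) subgroup.subset[OF L]] by simp
  also have "\<dots> \<subseteq> conj_set G (inv (b \<otimes> a)) K"
    using conj_set_mono[OF b(2)] .
  also have "\<dots> = K"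
    using conj_set_subgroup_self[OF K subgroup.m_inv_closed[OF K \<open>b \<otimes> a \<in> K\<close>]] .
  finally show "conj_set G (inv a) L \<subseteq> K" .
qed

end

section \<open>Cyclic groups and maximal subgroups\<close>

definition maximal_subgroup :: "('g, 'b) monoid_scheme \<Rightarrow> 'g set \<Rightarrow> 'g set \<Rightarrow> bool" where
  "maximal_subgroup G M K \<longleftrightarrow> subgroup M G \<and> subgroup K G \<and> M \<subset> K \<and>
     (\<forall>L. subgroup L G \<and> M \<subseteq> L \<and> L \<subseteq> K \<longrightarrow> L = M \<or> L = K)"

definition maximal_chain :: "('g, 'b) monoid_scheme \<Rightarrow> 'g set list \<Rightarrow> bool" where
  "maximal_chain G objs \<longleftrightarrow>
     (\<forall>i. Suc i < length objs \<longrightarrow> maximal_subgroup G (objs ! i) (objs ! Suc i))"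

definition cyclic_prime_power :: "('g, 'b) monoid_scheme \<Rightarrow> 'g set \<Rightarrow> bool" where
  "cyclic_prime_power G H \<longleftrightarrow>
     cyclic_group (G\<lparr>carrier := H\<rparr>) \<and> (\<exists>p k. Factorial_Ring.prime (p::nat) \<and> card H = p ^ k)"

lemma two_prime_divisors_if_not_prime_power:
  fixes n :: nat
  assumes "n > 1" and not_pp: "\<nexists>p k. Factorial_Ring.prime p \<and> n = p ^ k"
  obtains p q where "Factorial_Ring.prime p" "Factorial_Ring.prime q" "p \<noteq> q" "p dvd n" "q dvd n"
proof -
  obtain p where p: "Factorial_Ring.prime p" "p dvd n"
    using prime_factor_nat[of n] \<open>n > 1\<close> by auto
  obtain y where y: "n = p ^ multiplicity p n * y" "\<not> p dvd y"
  proof (rule multiplicity_decompose')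
    show "n \<noteq> 0" "\<not> is_unit p"
      using \<open>n > 1\<close> p(1) not_prime_unit by auto
  qed
  have "y \<noteq> 1"
    using not_pp p(1) y(1) by auto
  then obtain q where q: "Factorial_Ring.prime q" "q dvd y"
    using prime_factor_nat by blast
  have "p \<noteq> q"
    using q y by blast
  moreover have "q dvd n"
    using q y by (metis dvd_mult)
  ultimately show ?thesis
    using that p q by blast
qed

context group
begin

lemma subgroup_nat_pow_closed: "subgroup M G \<Longrightarrow> a \<in> M \<Longrightarrow> a [^] (k::nat) \<in> M"
  using subgroup_int_pow_closed[of M a "int k"] by (simp add: int_pow_int)

lemma pow_card_subgroup_eq_one:
  assumes A: "subgroup A G" and "finite A" and a: "a \<in> A"
  shows "a [^] card A = \<one>"
proof -
  interpret A: group "G\<lparr>carrier := A\<rparr>"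
    using subgroup.subgroup_is_group[OF A is_group] .
  show ?thesis
    using A.pow_order_eq_1[of a] a nat_pow_consistent[of a "card A" A] unfolding order_def by simp
qed

lemma cyclic_subgroupE:
  assumes H: "subgroup H G" and "cyclic_group (G\<lparr>carrier := H\<rparr>)"
  obtains z where "z \<in> H" "H = generate G {z}"
proof -
  interpret H: group "G\<lparr>carrier := H\<rparr>"
    using subgroup.subgroup_is_group[OF H is_group] .
  obtain z where z: "z \<in> H" "H = range (\<lambda>n::int. z [^]\<^bsub>G\<lparr>carrier := H\<rparr>\<^esub> n)"
    using \<open>cyclic_group (G\<lparr>carrier := H\<rparr>)\<close> H.cyclic_group by auto
  then have "H = generate G {z}"
    using int_pow_consistent[OF H z(1)] generate_pow[OF subgroup.mem_carrier[OF H z(1)]] by auto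
  with z(1) show ?thesis
    using that by blast
qed

lemma cyclic_group_generate:
  assumes "z \<in> carrier G"
  shows "cyclic_group (G\<lparr>carrier := generate G {z}\<rparr>)"
proof -
  have "carrier G \<inter> {z} = {z}"
    using assms by blast
  then show ?thesis
    using cyclic_group_generated[of z] unfolding subgroup_generated_def by simp
qed

lemma generate_singleton_commute:
  assumes z: "z \<in> carrier G" and "u \<in> generate G {z}" "a \<in> generate G {z}"
  shows "u \<otimes> a = a \<otimes> u"
proof -
  obtain i j :: int where "u = z [^] i" "a = z [^] j"
    using assms generate_pow[OF z] by auto
  then show ?thesis
    using int_pow_mult[OF z, of i j] int_pow_mult[OF z, of j i] by (simp add: add.commute)
qed

lemma ord_pow_dvd:
  assumes "z \<in> carrier G" "k dvd ord z" "k > 0"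
  shows "ord (z [^] k) = ord z div k"
  using ord_pow_gen[OF assms(1), of k] assms(2,3) by (simp add: gcd_nat.absorb2)

lemma nat_pow_mem_generate: "z \<in> carrier G \<Longrightarrow> z [^] (k::nat) \<in> generate G {z}"
  using generate_pow[of z] int_pow_int[of G z k] by (auto intro!: exI[of _ "int k"])

lemma generate_pow_subset: "z \<in> carrier G \<Longrightarrow> generate G {z [^] (k::nat)} \<subseteq> generate G {z}"
  using generate_subgroup_incl[OF _ generate_is_subgroup] nat_pow_mem_generate by simp

lemma mem_generate_pow_if_pow_eq_one:
  assumes z: "z \<in> carrier G" and ord_z: "ord z = e * d" and "d > 0"
    and a: "a \<in> generate G {z}" "a [^] d = \<one>"
  shows "a \<in> generate G {z [^] e}"
proof -
  obtain i :: int where i: "a = z [^] i"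
    using a(1) generate_pow[OF z] by auto
  have "z [^] (i * int d) = (z [^] i) [^] int d"
    using int_pow_pow[OF z] by simp
  also have "\<dots> = \<one>"
    using a(2) i by (simp add: int_pow_int)
  finally have "int e * int d dvd i * int d"
    using int_pow_eq_id[OF z] ord_z by (metis of_nat_mult)
  then obtain k where "i = int e * k"
    using \<open>d > 0\<close> by (auto elim!: dvdE)
  then have "a = (z [^] int e) [^] k"
    using i int_pow_pow[OF z] by simp
  then show ?thesis
    using generate_pow[of "z [^] e"] z by (auto simp: int_pow_int)
qed

lemma subgroup_of_cyclic_eq_generate:
  assumes z: "z \<in> carrier G" and fin: "finite (generate G {z})"
    and A: "subgroup A G" and AZ: "A \<subseteq> generate G {z}"
  shows "A = generate G {z [^] (ord z div card A)}"
proof -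
  define d where "d = card A"
  define e where "e = ord z div d"
  have "d dvd ord z"
    unfolding d_def generate_pow_card[OF z]
    using card_subgroup_dvd[OF A generate_is_subgroup AZ fin] z by simp
  then have ord_z: "ord z = e * d"
    unfolding e_def by simp
  have "d > 0"
    unfolding d_def using finite_subset[OF AZ fin] subgroup.one_closed[OF A] card_gt_0_iff by blast
  moreover have "ord z > 0"
    using finite_cyclic_subgroup_order[OF z] fin z by (simp add: carrier_subgroup_generated)
  ultimately have "ord (z [^] e) = d"
    using ord_pow_dvd[OF z, of e] ord_z by simp
  then have "card (generate G {z [^] e}) = d"
    using generate_pow_card z by simp
  moreover have "A \<subseteq> generate G {z [^] e}"
    using mem_generate_pow_if_pow_eq_one[OF z ord_z \<open>d > 0\<close>] AZ
      pow_card_subgroup_eq_one[OF A finite_subset[OF AZ fin]]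
    unfolding d_def by blast
  moreover have "finite (generate G {z [^] e})"
    using finite_subset[OF generate_pow_subset[OF z] fin] .
  ultimately show ?thesis
    using card_subset_eq unfolding e_def d_def by metis
qed

lemma subgroups_of_cyclic_eq:
  assumes "z \<in> carrier G" "finite (generate G {z})"
    and "subgroup A G" "A \<subseteq> generate G {z}" "subgroup B G" "B \<subseteq> generate G {z}"
    and "card A = card B"
  shows "A = B"
  using subgroup_of_cyclic_eq_generate[of z A] subgroup_of_cyclic_eq_generate[of z B] assms by simp

lemma proper_subgroup_of_cyclic_prime_power:
  assumes z: "z \<in> carrier G" and fin: "finite (generate G {z})"
    and q: "Factorial_Ring.prime q" and card_Z: "card (generate G {z}) = q ^ j"
    and M: "subgroup M G" "M \<subset> generate G {z}"
  shows "M \<subseteq> generate G {z [^] q}"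
proof -
  have "card M dvd q ^ j"
    using card_subgroup_dvd[OF M(1) generate_is_subgroup _ fin] M(2) z card_Z by simp
  then obtain a where a: "a \<le> j" "card M = q ^ a"
    using divides_primepow_nat[OF q] by blast
  have "q > 1"
    using q prime_gt_1_nat by blast
  then have "a < j"
    using psubset_card_mono[OF fin M(2)] a card_Z by (auto simp: le_less)
  have "ord z div card M = q ^ (j - a)"
    using generate_pow_card[OF z] card_Z a \<open>q > 1\<close> by (simp add: power_diff)
  also have "\<dots> = q * q ^ (j - a - 1)"
    using \<open>a < j\<close> by (cases "j - a") auto
  finally have "M = generate G {(z [^] q) [^] (q ^ (j - a - 1))}"
    using subgroup_of_cyclic_eq_generate[OF z fin M(1)] M(2) nat_pow_pow[OF z] by auto
  then show ?thesis
    using generate_pow_subset[of "z [^] q"] z by simp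
qed

lemma card_maximal_subgroup_of_cyclic:
  assumes z: "z \<in> carrier G" and fin: "finite (generate G {z})"
    and q: "Factorial_Ring.prime q" and card_Z: "card (generate G {z}) = q ^ j"
    and M: "maximal_subgroup G M (generate G {z})"
  shows "card (generate G {z}) = q * card M"
proof -
  let ?Z = "generate G {z}" and ?L = "generate G {z [^] q}"
  have M_sub: "subgroup M G" "M \<subset> ?Z"
    and M_max: "\<And>L. subgroup L G \<Longrightarrow> M \<subseteq> L \<Longrightarrow> L \<subseteq> ?Z \<Longrightarrow> L = M \<or> L = ?Z"
    using M unfolding maximal_subgroup_def by auto
  have "q > 1"
    using q prime_gt_1_nat by blast
  have "card M > 0"
    using M_sub finite_subset[OF _ fin] subgroup.one_closed card_gt_0_iff by blast
  then have "j > 0"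
    using psubset_card_mono[OF fin M_sub(2)] card_Z by (cases j) auto
  then have "ord (z [^] q) = q ^ (j - 1)"
    using ord_pow_dvd[OF z, of q] generate_pow_card[OF z] card_Z \<open>q > 1\<close> by (simp add: power_diff)
  then have card_L: "card ?L = q ^ (j - 1)"
    using generate_pow_card z by simp
  moreover have "q ^ (j - 1) \<noteq> q ^ j"
    using \<open>j > 0\<close> \<open>q > 1\<close> by (simp add: power_inject_exp)
  ultimately have "?L \<noteq> ?Z"
    using card_Z by metis
  moreover have "subgroup ?L G"
    using generate_is_subgroup z by simp
  ultimately have "?L = M"
    using M_max proper_subgroup_of_cyclic_prime_power[OF z fin q card_Z M_sub]
      generate_pow_subset[OF z] by blast
  then show ?thesis
    using card_L card_Z \<open>j > 0\<close> by (simp add: power_eq_if)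
qed

lemma exists_maximal_subgroup:
  assumes K: "subgroup K G" "finite K"
  shows "subgroup A G \<Longrightarrow> A \<subset> K \<Longrightarrow> \<exists>M. maximal_subgroup G M K \<and> A \<subseteq> M"
proof (induction "card K - card A" arbitrary: A rule: less_induct)
  case less
  show ?case
  proof (cases "maximal_subgroup G A K")
    case False
    then obtain L where L: "subgroup L G" "A \<subset> L" "L \<subset> K"
      using less.prems K unfolding maximal_subgroup_def by blast
    have "card K - card L < card K - card A"
      using psubset_card_mono[OF finite_subset[OF _ K(2)] L(2)] psubset_card_mono[OF K(2) L(3)] L(3)
      by auto
    then show ?thesis
      using less.hyps[OF _ L(1,3)] L(2) by blast
  qed blast
qed

lemma maximal_chain_snoc:
  assumes "maximal_chain G (objs @ [M])" "maximal_subgroup G M K"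
  shows "maximal_chain G (objs @ [M, K])"
  using assms unfolding maximal_chain_def
  by (auto simp: nth_append less_Suc_eq not_less_eq nth_Cons' split: if_splits)

lemma maximal_chain_mono:
  assumes "maximal_chain G objs" "i \<le> j" "j < length objs"
  shows "objs ! i \<subseteq> objs ! j"
  using assms(2,3)
proof (induction j)
  case (Suc j)
  then show ?case
    using assms(1) unfolding maximal_chain_def maximal_subgroup_def
    by (metis le_Suc_eq Suc_lessD order.trans psubset_imp_subset order.refl)
qed simp

lemma exists_maximal_chain:
  "subgroup B G \<Longrightarrow> finite B \<Longrightarrow> \<exists>objs. maximal_chain G (objs @ [B]) \<and> (objs @ [B]) ! 0 = {\<one>}"
proof (induction "card B" arbitrary: B rule: less_induct)
  case less
  show ?case
  proof (cases "B = {\<one>}")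
    case True
    then show ?thesis
      by (intro exI[of _ "[]"]) (simp add: maximal_chain_def)
  next
    case False
    then have "{\<one>} \<subset> B"
      using subgroup.one_closed[OF less.prems(1)] by blast
    then obtain M where M: "maximal_subgroup G M B"
      using exists_maximal_subgroup[OF less.prems triv_subgroup] by blast
    then have "subgroup M G" "M \<subset> B"
      unfolding maximal_subgroup_def by auto
    then obtain objs where "maximal_chain G (objs @ [M])" "(objs @ [M]) ! 0 = {\<one>}"
      using less.hyps less.prems(2) psubset_card_mono finite_subset by (metis psubset_imp_subset)
    then show ?thesis
      using maximal_chain_snoc[OF _ M]
      by (intro exI[of _ "objs @ [M]"]) (simp add: nth_append split: if_splits)
  qed
qed

lemma exists_maximal_chain_to:
  assumes M: "maximal_subgroup G M K" and "finite K"
  shows "\<exists>objs. maximal_chain G (objs @ [M, K]) \<and> (objs @ [M, K]) ! 0 = {\<one>}"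
proof -
  have "subgroup M G" "finite M"
    using M finite_subset[OF _ \<open>finite K\<close>] unfolding maximal_subgroup_def by auto
  then obtain objs where "maximal_chain G (objs @ [M])" "(objs @ [M]) ! 0 = {\<one>}"
    using exists_maximal_chain by blast
  then show ?thesis
    using maximal_chain_snoc[OF _ M] by (metis append.assoc append_Cons append_Nil nth_append_left
        length_append_singleton zero_less_Suc)
qed

lemma mem_subgroup_if_coprime_pows:
  fixes p q :: nat
  assumes M: "subgroup M G" and g: "g \<in> carrier G" and "coprime p q"
    and gp: "g [^] p \<in> M" and gq: "g [^] q \<in> M"
  shows "g \<in> M"
proof (cases "p = 0")
  case True
  then show ?thesis
    using \<open>coprime p q\<close> gq g by (simp add: nat_dvd_1_iff_1)
next
  case False
  then obtain x y where xy: "p * x = q * y + 1"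
    using bezout_nat[of p q] \<open>coprime p q\<close> by auto
  have "g [^] (p * x) = g [^] (q * y) \<otimes> g"
    using xy nat_pow_mult[OF g, of "q * y" 1] by simp
  then have "g = inv (g [^] (q * y)) \<otimes> g [^] (p * x)"
    using g by simp
  also have "\<dots> \<in> M"
    using subgroup_nat_pow_closed[OF M gp] subgroup_nat_pow_closed[OF M gq] nat_pow_pow[OF g]
    by (metis subgroup.m_closed subgroup.m_inv_closed M)
  finally show ?thesis .
qed

lemma generate_eq_if_unique_maximal:
  assumes K: "subgroup K G" "finite K" and M: "maximal_subgroup G M K"
    and unique: "\<And>M'. maximal_subgroup G M' K \<Longrightarrow> M' = M"
    and h: "h \<in> K" "h \<notin> M"
  shows "generate G {h} = K"
proof (rule ccontr)
  assume "generate G {h} \<noteq> K"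
  moreover have "h \<in> carrier G" "generate G {h} \<subseteq> K"
    using h K(1) subgroup.mem_carrier generate_subgroup_incl[of "{h}" K] by auto
  ultimately have "generate G {h} \<subseteq> M"
    using exists_maximal_subgroup[OF K generate_is_subgroup] unique by blast
  then show False
    using h generate.incl[of h "{h}" G] by blast
qed

lemma cyclic_prime_power_if_unique_maximal:
  assumes K: "subgroup K G" "finite K" and M: "maximal_subgroup G M K"
    and unique: "\<And>M'. maximal_subgroup G M' K \<Longrightarrow> M' = M"
  shows "cyclic_prime_power G K"
proof -
  have generates: "generate G {h} = K" if "h \<in> K" "h \<notin> M" for h
    using generate_eq_if_unique_maximal[OF K M unique that] .
  obtain g where g: "g \<in> K" "g \<notin> M"
    using M unfolding maximal_subgroup_def by blast
  have gc: "g \<in> carrier G"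
    using subgroup.mem_carrier[OF K(1) g(1)] .
  have ord_g: "ord g = card K"
    using generate_pow_card[OF gc] generates[OF g] by simp
  have M_sub: "subgroup M G" "M \<subset> K"
    using M unfolding maximal_subgroup_def by auto
  then have "card M > 0"
    using finite_subset[OF _ K(2)] subgroup.one_closed[OF M_sub(1)] by (auto simp: card_gt_0_iff)
  then have "card K > 1"
    using psubset_card_mono[OF K(2) M_sub(2)] by simp
  have pow_in_M: "g [^] r \<in> M" if r: "Factorial_Ring.prime r" "r dvd card K" for r
  proof (rule ccontr)
    assume "g [^] r \<notin> M"
    then have "generate G {g [^] r} = generate G {g}"
      using generates subgroup_nat_pow_closed[OF K(1) g(1)] generates[OF g] by simp
    moreover have "ord (g [^] r) < ord g"
      using ord_pow_dvd[OF gc, of r] r ord_g \<open>card K > 1\<close> prime_gt_1_nat[OF r(1)] by simp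
    ultimately show False
      using generate_pow_card gc by (metis nat_pow_closed less_irrefl)
  qed
  have "\<exists>p k. Factorial_Ring.prime p \<and> card K = p ^ k"
  proof (rule ccontr)
    assume "\<nexists>p k. Factorial_Ring.prime p \<and> card K = p ^ k"
    with \<open>card K > 1\<close> obtain p q where pq: "Factorial_Ring.prime p" "Factorial_Ring.prime q" "p \<noteq> q"
      "p dvd card K" "q dvd card K"
      by (rule two_prime_divisors_if_not_prime_power)
    then have "g \<in> M"
      using mem_subgroup_if_coprime_pows[OF M_sub(1) gc primes_coprime[OF pq(1-3)]] pow_in_M by blast
    with g(2) show False ..
  qed
  then show ?thesis
    using cyclic_group_generate[OF gc] generates[OF g] unfolding cyclic_prime_power_def by simp
qed

lemma two_maximal_subgroups:
  assumes K: "subgroup K G" "finite K" and not_cpp: "\<not> cyclic_prime_power G K"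
  obtains M M' where "maximal_subgroup G M K" "maximal_subgroup G M' K" "M \<noteq> M'"
proof -
  have "generate G {\<one>} = {\<one>}"
    using generate_pow[OF one_closed] by auto
  then have "cyclic_group (G\<lparr>carrier := {\<one>}\<rparr>)"
    using cyclic_group_generate[OF one_closed] by simp
  moreover have "card {\<one>} = 2 ^ 0"
    by simp
  ultimately have "cyclic_prime_power G {\<one>}"
    using two_is_prime_nat unfolding cyclic_prime_power_def by blast
  then have "{\<one>} \<subset> K"
    using not_cpp subgroup.one_closed[OF K(1)] by blast
  then obtain M where "maximal_subgroup G M K"
    using exists_maximal_subgroup[OF K triv_subgroup] by blast
  then show ?thesis
    using cyclic_prime_power_if_unique_maximal[OF K] not_cpp that by blast
qed

end

section \<open>Chains of morphisms\<close>

definition conj_chain :: "('g, 'b) monoid_scheme \<Rightarrow> nat \<Rightarrow> (nat \<Rightarrow> 'g set) \<Rightarrow> (nat \<Rightarrow> 'g) \<Rightarrow> bool" where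
  "conj_chain G n H g \<longleftrightarrow> (\<forall>i\<le>n. subgroup (H i) G) \<and>
     (\<forall>i<n. g i \<in> carrier G \<and> conj_set G (g i) (H i) \<subseteq> H (Suc i))"

fun left_prod :: "('g, 'b) monoid_scheme \<Rightarrow> (nat \<Rightarrow> 'g) \<Rightarrow> nat \<Rightarrow> 'g" where
  "left_prod G g 0 = \<one>\<^bsub>G\<^esub>"
| "left_prod G g (Suc n) = g n \<otimes>\<^bsub>G\<^esub> left_prod G g n"

context group
begin

lemma left_prod_closed: "(\<And>i. i < n \<Longrightarrow> g i \<in> carrier G) \<Longrightarrow> left_prod G g n \<in> carrier G"
  by (induction n) auto

lemma left_prod_quotient_Suc:
  assumes "g i \<in> carrier G" "g' i \<in> carrier G" "left_prod G g i \<in> carrier G" "left_prod G g' i \<in> carrier G"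
  shows "g' i \<otimes> (left_prod G g' i \<otimes> inv (left_prod G g i))
    = (left_prod G g' (Suc i) \<otimes> inv (left_prod G g (Suc i))) \<otimes> g i"
  using assms by (simp add: inv_mult_group m_assoc)

lemma conj_chain_subgroup: "conj_chain G n H g \<Longrightarrow> i \<le> n \<Longrightarrow> subgroup (H i) G"
  unfolding conj_chain_def by blast

lemma conj_chain_left_prod_closed: "conj_chain G n H g \<Longrightarrow> m \<le> n \<Longrightarrow> left_prod G g m \<in> carrier G"
  unfolding conj_chain_def by (auto intro: left_prod_closed)

lemma conj_chain_left_prod:
  assumes H: "conj_chain G n H g" and "i \<le> j" "j \<le> n"
  shows "conj_set G (left_prod G g j \<otimes> inv (left_prod G g i)) (H i) \<subseteq> H j"
  using \<open>i \<le> j\<close> \<open>j \<le> n\<close>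
proof (induction j rule: dec_induct)
  case base
  have "left_prod G g i \<in> carrier G"
    using H base left_prod_closed unfolding conj_chain_def by simp
  then show ?case
    using H base conj_set_one[OF subgroup.subset] unfolding conj_chain_def by simp
next
  case (step m)
  have "subgroup (H i) G"
    using H step unfolding conj_chain_def by simp
  then have carrier: "H i \<subseteq> carrier G" "g m \<in> carrier G" "left_prod G g m \<in> carrier G"
    "left_prod G g i \<in> carrier G"
    using H step left_prod_closed[of _ g] subgroup.subset[of "H i" G] unfolding conj_chain_def by auto
  have "conj_set G (left_prod G g (Suc m) \<otimes> inv (left_prod G g i)) (H i)
      = conj_set G (g m) (conj_set G (left_prod G g m \<otimes> inv (left_prod G g i)) (H i))"
    using carrier conj_set_mult by (simp add: m_assoc)
  also have "\<dots> \<subseteq> conj_set G (g m) (H m)"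
    using conj_set_mono step by simp
  also have "\<dots> \<subseteq> H (Suc m)"
    using H step unfolding conj_chain_def by simp
  finally show ?case .
qed

lemma orb_chain_comp_orb_map:
  assumes H: "conj_chain G n H g" and "length ms = n"
    and ms: "\<And>i. i < n \<Longrightarrow> ms ! i = orb_map G (H i) (H (Suc i)) (g i)"
  shows "orb_chain_comp G (H 0) ms = orb_map G (H 0) (H n) (left_prod G g n)"
proof -
  have H_sub: "\<And>i. i \<le> n \<Longrightarrow> subgroup (H i) G"
    and g: "\<And>i. i < n \<Longrightarrow> g i \<in> carrier G \<and> conj_set G (g i) (H i) \<subseteq> H (Suc i)"
    using H unfolding conj_chain_def by auto
  have partial: "foldl (\<lambda>acc m. m \<circ> acc) id (take m ms) (a <# H 0) = (a \<otimes> inv (left_prod G g m)) <# H m"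
    if "m \<le> n" "a \<in> carrier G" for m a
    using that
  proof (induction m)
    case (Suc m)
    have "take (Suc m) ms = take m ms @ [ms ! m]"
      using Suc.prems \<open>length ms = n\<close> by (simp add: take_Suc_conv_app_nth)
    then show ?case
      using Suc orb_map_apply[OF H_sub H_sub _ _ m_closed[OF _ inv_closed]] ms g
        left_prod_closed[of m g] by (simp add: m_assoc inv_mult_group)
  qed simp
  have "left_prod G g n \<in> carrier G"
    using g left_prod_closed by blast
  then have "conj_set G (left_prod G g n) (H 0) \<subseteq> H n"
    using conj_chain_left_prod[OF H, of 0 n] by simp
  then show ?thesis
    unfolding orb_chain_comp_def
    using partial[of n] orb_map_apply[OF H_sub H_sub left_prod_closed] \<open>length ms = n\<close> g
    by (intro coset_space_fun_eqI[OF restrict_extensional orb_map_extensional])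
      (simp add: l_coset_in_coset_space)
qed

lemma card_conj_chain_prime_power:
  assumes H: "conj_chain G n H g"
    and max: "\<And>i. i < n \<Longrightarrow> maximal_subgroup G (conj_set G (g i) (H i)) (H (Suc i))"
    and cpp: "\<And>i. i \<le> n \<Longrightarrow> finite (H i) \<and> cyclic_prime_power G (H i)"
    and p: "Factorial_Ring.prime p" and card_n: "card (H n) = p ^ k"
  shows "i \<le> n \<Longrightarrow> card (H i) = card (H 0) * p ^ i"
proof (induction i)
  case (Suc i)
  have sub: "subgroup (H i) G" "subgroup (H (Suc i)) G" "subgroup (H n) G" and g: "g i \<in> carrier G"
    using H Suc.prems unfolding conj_chain_def by auto
  have fin: "finite (H (Suc i))" "finite (H n)" and "cyclic_prime_power G (H (Suc i))"
    using cpp Suc.prems by auto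
  then obtain z q j where z: "z \<in> H (Suc i)" "H (Suc i) = generate G {z}"
    and q: "Factorial_Ring.prime q" "card (H (Suc i)) = q ^ j"
    using cyclic_subgroupE[OF sub(2)] unfolding cyclic_prime_power_def by metis
  have "maximal_subgroup G (conj_set G (g i) (H i)) (generate G {z})"
    using max[of i] Suc.prems z(2) by (simp add: Suc_le_eq)
  moreover have "finite (generate G {z})" "card (generate G {z}) = q ^ j"
    using fin q(2) z(2) by auto
  ultimately have "card (generate G {z}) = q * card (conj_set G (g i) (H i))"
    using card_maximal_subgroup_of_cyclic[OF subgroup.mem_carrier[OF sub(2) z(1)] _ q(1)] by blast
  then have "card (H (Suc i)) = q * card (H i)"
    using z(2) card_conj_set[OF g subgroup.subset[OF sub(1)]] by simp
  moreover have "card (H (Suc i)) dvd p ^ k"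
  proof -
    define b where "b = left_prod G g n \<otimes> inv (left_prod G g (Suc i))"
    have b: "b \<in> carrier G"
      unfolding b_def using conj_chain_left_prod_closed[OF H] Suc.prems by (simp del: left_prod.simps)
    have "conj_set G b (H (Suc i)) \<subseteq> H n"
      unfolding b_def using conj_chain_left_prod[OF H Suc.prems order.refl] .
    then show ?thesis
      using card_subgroup_dvd[OF subgroup_conj_set[OF sub(2) b] sub(3) _ fin(2)]
        card_conj_set[OF b subgroup.subset[OF sub(2)]] card_n by simp
  qed
  ultimately have "q dvd p ^ k"
    by (metis dvd_mult_left)
  then have "q = p"
    using prime_dvd_power[OF q(1)] primes_dvd_imp_eq[OF q(1) p] by blast
  then show ?case
    using Suc \<open>card (H (Suc i)) = q * card (H i)\<close> by simp
qed simp

lemma conj_chains_conjugate: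
  assumes H: "conj_chain G n H g" and H': "conj_chain G n H' g'"
    and z: "z \<in> carrier G" "H n = generate G {z}" "finite (H n)" and "H' n = H n"
    and cards: "\<And>i. i \<le> n \<Longrightarrow> card (H' i) = card (H i)"
    and u: "left_prod G g' n \<otimes> inv (left_prod G g n) \<in> H n"
    and "i \<le> n"
  shows "conj_set G (left_prod G g' i \<otimes> inv (left_prod G g i)) (H i) = H' i"
proof -
  define b where "b = left_prod G g n \<otimes> inv (left_prod G g i)"
  define b' where "b' = left_prod G g' n \<otimes> inv (left_prod G g' i)"
  define u where "u = left_prod G g' n \<otimes> inv (left_prod G g n)"
  have carrier: "left_prod G g n \<in> carrier G" "left_prod G g i \<in> carrier G"
    "left_prod G g' n \<in> carrier G" "left_prod G g' i \<in> carrier G"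
    using conj_chain_left_prod_closed[OF H] conj_chain_left_prod_closed[OF H'] \<open>i \<le> n\<close> by auto
  have sub: "subgroup (H i) G" "subgroup (H' i) G" "subgroup (H n) G"
    using conj_chain_subgroup[OF H] conj_chain_subgroup[OF H'] \<open>i \<le> n\<close> by auto
  have b: "b \<in> carrier G" "b' \<in> carrier G" "u \<in> carrier G"
    unfolding b_def b'_def u_def using carrier by auto
  have bH: "conj_set G b (H i) \<subseteq> H n" and bH': "conj_set G b' (H' i) \<subseteq> H n"
    unfolding b_def b'_def using conj_chain_left_prod[OF H \<open>i \<le> n\<close>] conj_chain_left_prod[OF H' \<open>i \<le> n\<close>]
      \<open>H' n = H n\<close> by auto
  have same_image: "conj_set G b (H i) = conj_set G b' (H' i)"
    using subgroups_of_cyclic_eq[OF z(1) _ subgroup_conj_set[OF sub(1) b(1)] _ subgroup_conj_set[OF sub(2) b(2)]]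
      bH bH' z(2,3) card_conj_set b sub subgroup.subset cards[OF \<open>i \<le> n\<close>] by metis
  have "u \<otimes> a = a \<otimes> u" if "a \<in> conj_set G b (H i)" for a
    using generate_singleton_commute[OF z(1)] u bH z(2) that unfolding u_def by auto
  then have commutes: "conj_set G u (conj_set G b (H i)) = conj_set G b (H i)"
    using conj_set_commuting[OF b(3)] bH subgroup.subset[OF sub(3)] by blast
  have "left_prod G g' i \<otimes> inv (left_prod G g i) = inv b' \<otimes> u \<otimes> b"
    unfolding b_def b'_def u_def using carrier by (simp add: inv_mult_group m_assoc)
  then have "conj_set G (left_prod G g' i \<otimes> inv (left_prod G g i)) (H i)
      = conj_set G (inv b') (conj_set G u (conj_set G b (H i)))"
    using conj_set_mult[of "inv b' \<otimes> u" b] conj_set_mult[of "inv b'" u] b bH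
      subgroup.subset[OF sub(1)] subgroup.subset[OF sub(3)] by auto
  also have "\<dots> = H' i"
    using commutes same_image conj_set_inv[OF b(2) subgroup.subset[OF sub(2)]] by simp
  finally show ?thesis .
qed

lemma conj_chains_orb_isos:
  assumes H: "conj_chain G n ((!) objs) g" and H': "conj_chain G n ((!) objs') g'"
    and len: "length objs = Suc n"
    and ms: "\<And>i. i < n \<Longrightarrow> ms ! i = orb_map G (objs ! i) (objs ! Suc i) (g i)"
    and ms': "\<And>i. i < n \<Longrightarrow> ms' ! i = orb_map G (objs' ! i) (objs' ! Suc i) (g' i)"
    and conj: "\<And>i. i \<le> n \<Longrightarrow> conj_set G (left_prod G g' i \<otimes> inv (left_prod G g i)) (objs ! i) = objs' ! i"
    and last: "left_prod G g' n \<otimes> inv (left_prod G g n) \<in> objs ! n"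
  shows "\<exists>hs. length hs = length objs \<and>
           hs ! 0 = orb_id G (objs ! 0) \<and> hs ! n = orb_id G (objs ! n) \<and>
           (\<forall>i\<le>n. orb_iso G (objs ! i) (objs' ! i) (hs ! i)) \<and>
           (\<forall>i<n. orb_comp G (objs ! i) (ms' ! i) (hs ! i) = orb_comp G (objs ! i) (hs ! Suc i) (ms ! i))"
proof -
  define c where "c i = left_prod G g' i \<otimes> inv (left_prod G g i)" for i
  define hs where "hs = map (\<lambda>i. orb_map G (objs ! i) (objs' ! i) (c i)) [0..<Suc n]"
  have hs: "hs ! i = orb_map G (objs ! i) (objs' ! i) (c i)" if "i \<le> n" for i
    unfolding hs_def using that by (simp del: upt_Suc)
  have sub: "subgroup (objs ! i) G" "subgroup (objs' ! i) G" if "i \<le> n" for i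
    using conj_chain_subgroup[OF H that] conj_chain_subgroup[OF H' that] by auto
  have c: "c i \<in> carrier G" "conj_set G (c i) (objs ! i) = objs' ! i" if "i \<le> n" for i
    unfolding c_def using conj_chain_left_prod_closed[OF H that] conj_chain_left_prod_closed[OF H' that]
      conj[OF that] by simp_all
  have "objs' ! 0 = objs ! 0"
    using conj[of 0] conj_set_one[OF subgroup.subset[OF sub(1)]] by simp
  then have "hs ! 0 = orb_id G (objs ! 0)"
    using hs[of 0] orb_map_self_eq_orb_id[OF sub(1) subgroup.one_closed[OF sub(1)]]
    unfolding c_def by simp
  moreover have "objs' ! n = objs ! n"
    using conj[of n] conj_set_subgroup_self[OF sub(1) last] by simp
  then have "hs ! n = orb_id G (objs ! n)"
    using hs[of n] orb_map_self_eq_orb_id[OF sub(1) last] unfolding c_def by simp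
  moreover have "\<forall>i\<le>n. orb_iso G (objs ! i) (objs' ! i) (hs ! i)"
    using hs orb_iso_orb_map sub c by simp
  moreover have "orb_comp G (objs ! i) (ms' ! i) (hs ! i) = orb_comp G (objs ! i) (hs ! Suc i) (ms ! i)"
    if "i < n" for i
  proof -
    have i: "i \<le> n" "Suc i \<le> n"
      using that by auto
    have g: "g i \<in> carrier G" "conj_set G (g i) (objs ! i) \<subseteq> objs ! Suc i"
      and g': "g' i \<in> carrier G" "conj_set G (g' i) (objs' ! i) \<subseteq> objs' ! Suc i"
      using H H' that unfolding conj_chain_def by auto
    then show ?thesis
      using orb_map_square[OF sub(1)[OF i(1)] sub(1)[OF i(2)] sub(2)[OF i(1)] sub(2)[OF i(2)] g g'
          c(1)[OF i(1)] _ c(1)[OF i(2)]] c(2)[OF i(1)] c(2)[OF i(2)] hs[OF i(1)] hs[OF i(2)] ms ms' that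
        left_prod_quotient_Suc[OF g(1) g'(1) conj_chain_left_prod_closed[OF H i(1)]
          conj_chain_left_prod_closed[OF H' i(1)]]
      unfolding c_def by simp
  qed
  moreover have "length hs = length objs"
    unfolding hs_def using len by simp
  ultimately show ?thesis
    by blast
qed

lemma inclusion_ladder_base_cosets:
  assumes sub: "\<And>i. i \<le> m \<Longrightarrow> subgroup (objs ! i) G" "\<And>i. i \<le> m \<Longrightarrow> subgroup (objs' ! i) G"
    and incl: "\<And>i. i < m \<Longrightarrow> objs ! i \<subseteq> objs ! Suc i" "\<And>i. i < m \<Longrightarrow> objs' ! i \<subseteq> objs' ! Suc i"
    and base: "(hs ! 0) (objs ! 0) = objs' ! 0"
    and comm: "\<And>i. i < m \<Longrightarrow>
      orb_comp G (objs ! i) (orb_map G (objs' ! i) (objs' ! Suc i) \<one>) (hs ! i) =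
      orb_comp G (objs ! i) (hs ! Suc i) (orb_map G (objs ! i) (objs ! Suc i) \<one>)"
  shows "i \<le> m \<Longrightarrow> (hs ! i) (objs ! i) = objs' ! i"
proof (induction i)
  case (Suc i)
  then have i: "i \<le> m" "Suc i \<le> m" "i < m"
    by auto
  have "(hs ! Suc i) (objs ! Suc i) =
      orb_comp G (objs ! i) (hs ! Suc i) (orb_map G (objs ! i) (objs ! Suc i) \<one>) (objs ! i)"
    using orb_map_one_base[OF sub(1)[OF i(1)] sub(1)[OF i(2)] incl(1)[OF i(3)]]
      subgroup_in_coset_space[OF sub(1)[OF i(1)]] by (simp add: orb_comp_def compose_eq)
  also have "\<dots> = objs' ! Suc i"
    using fun_cong[OF comm[OF i(3)], of "objs ! i"] Suc.IH[OF i(1)] orb_map_one_base[OF sub(2)[OF i(1)] sub(2)[OF i(2)] incl(2)[OF i(3)]]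
      subgroup_in_coset_space[OF sub(1)[OF i(1)]] by (simp add: orb_comp_def compose_eq)
  finally show ?case .
qed (use base in simp)

end

section \<open>Unique factorisation\<close>

locale finite_subgroup_family = group G for G :: "('a, 'b) monoid_scheme" (structure) +
  fixes F :: "'a set set"
  assumes family_subgroup: "H \<in> F \<Longrightarrow> subgroup H G"
    and family_finite: "H \<in> F \<Longrightarrow> finite H"
    and family_subgroup_closed: "H \<in> F \<Longrightarrow> subgroup L G \<Longrightarrow> L \<subseteq> H \<Longrightarrow> L \<in> F"
begin

lemma unfactorisable_imp_maximal:
  assumes HF: "H \<in> F" and KF: "K \<in> F" and g: "g \<in> carrier G" and gHK: "conj_set G g H \<subseteq> K"
    and unfact: "orb_unfactorisable G F H K (orb_map G H K g)"
  shows "maximal_subgroup G (conj_set G g H) K"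
proof -
  have H: "subgroup H G" "finite H" and K: "subgroup K G" "finite K"
    using HF KF family_subgroup family_finite by auto
  have "conj_set G g H \<noteq> K"
    using unfact orb_iso_orb_map[OF H(1) K(1) g] unfolding orb_unfactorisable_def by blast
  moreover have "L = conj_set G g H \<or> L = K"
    if L: "subgroup L G" "conj_set G g H \<subseteq> L" "L \<subseteq> K" for L
  proof -
    have LF: "L \<in> F" and fin: "finite L"
      using family_subgroup_closed[OF KF L(1,3)] family_finite by auto
    have "conj_set G \<one> L \<subseteq> K"
      using conj_set_one[OF subgroup.subset[OF L(1)]] L(3) by simp
    then have "orb_comp G H (orb_map G L K \<one>) (orb_map G H L g) = orb_map G H K g"
        and "orb_hom G H L (orb_map G H L g)" "orb_hom G L K (orb_map G L K \<one>)"
      using orb_comp_orb_map(2)[OF H(1) L(1) K(1) g one_closed L(2)] orb_hom_orb_map L K(1) H(1) g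
      by auto
    then have "orb_iso G H L (orb_map G H L g) \<or> orb_iso G L K (orb_map G L K \<one>)"
      using unfact LF unfolding orb_unfactorisable_def by blast
    then have "card (conj_set G g H) = card L \<or> card L = card K"
      using card_eq_of_orb_iso[OF H(1) L(1) _ H(2) fin] card_eq_of_orb_iso[OF L(1) K(1) _ fin K(2)]
        card_conj_set[OF g subgroup.subset[OF H(1)]] by auto
    then show ?thesis
      using card_subset_eq[OF fin L(2)] card_subset_eq[OF K(2) L(3)] by auto
  qed
  ultimately show ?thesis
    unfolding maximal_subgroup_def using subgroup_conj_set[OF H(1) g] K(1) gHK by auto
qed

lemma maximal_imp_unfactorisable:
  assumes HF: "H \<in> F" and KF: "K \<in> F" and max: "maximal_subgroup G H K"
  shows "orb_unfactorisable G F H K (orb_map G H K \<one>)"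
proof -
  have H: "subgroup H G" "finite H" and K: "subgroup K G" "finite K"
    using HF KF family_subgroup family_finite by auto
  have HK: "H \<subset> K" and between: "\<And>L. subgroup L G \<Longrightarrow> H \<subseteq> L \<Longrightarrow> L \<subseteq> K \<Longrightarrow> L = H \<or> L = K"
    using max unfolding maximal_subgroup_def by auto
  have one_HK: "conj_set G \<one> H \<subseteq> K"
    using conj_set_one[OF subgroup.subset[OF H(1)]] HK by auto
  have "\<not> orb_iso G H K (orb_map G H K \<one>)"
    using card_eq_of_orb_iso[OF H(1) K(1) _ H(2) K(2)] psubset_card_mono[OF K(2) HK] by auto
  moreover have "orb_iso G H L h \<or> orb_iso G L K k"
    if LF: "L \<in> F" and h: "orb_hom G H L h" and k: "orb_hom G L K k"
      and factor: "orb_comp G H k h = orb_map G H K \<one>" for L h k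
  proof -
    have L: "subgroup L G" "finite L"
      using LF family_subgroup family_finite by auto
    obtain a where a: "a \<in> carrier G" "conj_set G a H \<subseteq> L" "h = orb_map G H L a"
      using orb_homE[OF H(1) L(1) h] .
    obtain b where b: "b \<in> carrier G" "conj_set G b L \<subseteq> K" "k = orb_map G L K b"
      using orb_homE[OF L(1) K(1) k] .
    have "conj_set G (inv a) L = H \<or> conj_set G (inv a) L = K"
      using between[OF subgroup_conj_set[OF L(1) inv_closed[OF a(1)]]]
        conj_set_between_of_factorisation[OF H(1) K(1) L(1) psubset_imp_subset[OF HK] a(1,2) b(1,2)]
        factor a(3) b(3) by blast
    then have "card H = card L \<or> card L = card K"
      using card_conj_set[OF inv_closed[OF a(1)] subgroup.subset[OF L(1)]] by auto
    then show ?thesis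
      using orb_iso_orb_map_of_card_eq[OF H(1) L(1) L(2) a(1,2)] orb_iso_orb_map_of_card_eq[OF L(1) K(1) K(2) b(1,2)]
        a(3) b(3) by blast
  qed
  ultimately show ?thesis
    unfolding orb_unfactorisable_def using orb_hom_orb_map[OF H(1) K(1) one_closed one_HK] by blast
qed

lemma orb_chainE:
  assumes chain: "orb_chain G F x y objs ms"
  obtains g where "conj_chain G (length ms) ((!) objs) g"
    and "\<And>i. i < length ms \<Longrightarrow> maximal_subgroup G (conj_set G (g i) (objs ! i)) (objs ! Suc i)"
    and "\<And>i. i < length ms \<Longrightarrow> ms ! i = orb_map G (objs ! i) (objs ! Suc i) (g i)"
    and "\<And>i. i \<le> length ms \<Longrightarrow> objs ! i \<in> F"
    and "orb_chain_comp G x ms = orb_map G x y (left_prod G g (length ms))"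
proof -
  let ?n = "length ms"
  have len: "length objs = Suc ?n" and ends: "objs ! 0 = x" "objs ! ?n = y"
    and unfact: "\<And>i. i < ?n \<Longrightarrow> orb_unfactorisable G F (objs ! i) (objs ! Suc i) (ms ! i)"
    using chain unfolding orb_chain_def by auto
  have inF: "objs ! i \<in> F" if "i \<le> ?n" for i
    using chain len that unfolding orb_chain_def by (auto intro: nth_mem)
  have "\<forall>i\<in>{..<?n}. \<exists>a. a \<in> carrier G \<and> conj_set G a (objs ! i) \<subseteq> objs ! Suc i \<and>
      ms ! i = orb_map G (objs ! i) (objs ! Suc i) a"
    using orb_homE[OF family_subgroup family_subgroup] inF unfact
    unfolding orb_unfactorisable_def by (metis lessThan_iff less_imp_le_nat Suc_leI)
  then obtain g where g: "\<And>i. i < ?n \<Longrightarrow> g i \<in> carrier G \<and> conj_set G (g i) (objs ! i) \<subseteq> objs ! Suc i \<and>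
      ms ! i = orb_map G (objs ! i) (objs ! Suc i) (g i)"
    using bchoice[of "{..<?n}"] by (metis lessThan_iff)
  have H: "conj_chain G ?n ((!) objs) g"
    unfolding conj_chain_def using g inF family_subgroup by auto
  moreover have "maximal_subgroup G (conj_set G (g i) (objs ! i)) (objs ! Suc i)" if "i < ?n" for i
    using unfactorisable_imp_maximal[OF inF inF] g unfact that by simp
  moreover have "orb_chain_comp G x ms = orb_map G x y (left_prod G g ?n)"
    using orb_chain_comp_orb_map[OF H] g ends by simp
  ultimately show ?thesis
    using that g inF by blast
qed

lemma card_orb_chain:
  assumes cpp: "\<And>H. H \<in> F \<Longrightarrow> cyclic_prime_power G H" and chain: "orb_chain G F x y objs ms"
    and p: "Factorial_Ring.prime p" "card y = p ^ k" and "i \<le> length ms"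
  shows "card (objs ! i) = card x * p ^ i"
proof -
  obtain g where H: "conj_chain G (length ms) ((!) objs) g"
    and max: "\<And>i. i < length ms \<Longrightarrow> maximal_subgroup G (conj_set G (g i) (objs ! i)) (objs ! Suc i)"
    and inF: "\<And>i. i \<le> length ms \<Longrightarrow> objs ! i \<in> F"
    using orb_chainE[OF chain] by metis
  have "objs ! 0 = x" "objs ! length ms = y"
    using chain unfolding orb_chain_def by auto
  then show ?thesis
    using card_conj_chain_prime_power[OF H max _ p(1), of k] cpp inF family_finite p(2)
      \<open>i \<le> length ms\<close> by simp
qed

lemma orb_chains_same_length:
  assumes cpp: "\<And>H. H \<in> F \<Longrightarrow> cyclic_prime_power G H"
    and chains: "orb_chain G F x y objs ms" "orb_chain G F x y objs' ms'" and "x \<in> F" "y \<in> F"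
  shows "length ms' = length ms"
proof -
  obtain p k where p: "Factorial_Ring.prime p" "card y = p ^ k"
    using cpp[OF \<open>y \<in> F\<close>] unfolding cyclic_prime_power_def by blast
  have "objs ! length ms = y" "objs' ! length ms' = y" "card x > 0"
    using chains \<open>x \<in> F\<close> family_subgroup family_finite subgroup.one_closed card_gt_0_iff
    unfolding orb_chain_def by blast+
  then have "card x * p ^ length ms = card x * p ^ length ms'"
    using card_orb_chain[OF cpp chains(1) p order.refl] card_orb_chain[OF cpp chains(2) p order.refl]
    by simp
  then show ?thesis
    using \<open>card x > 0\<close> prime_gt_1_nat[OF p(1)] by (simp add: power_inject_exp)
qed

lemma orbit_category_ufp_if_cyclic_prime_power:
  assumes cpp: "\<And>H. H \<in> F \<Longrightarrow> cyclic_prime_power G H"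
  shows "orbit_category_ufp G F"
  unfolding orbit_category_ufp_def
proof (intro ballI allI impI)
  fix x y objs ms objs' ms'
  assume "x \<in> F" "y \<in> F" and "orb_chain G F x y objs ms \<and> orb_chain G F x y objs' ms' \<and>
    orb_chain_comp G x ms = orb_chain_comp G x ms'"
  then have chain: "orb_chain G F x y objs ms" and chain': "orb_chain G F x y objs' ms'"
    and same_comp: "orb_chain_comp G x ms' = orb_chain_comp G x ms"
    by auto
  define n where "n = length ms"
  obtain g where H: "conj_chain G n ((!) objs) g"
    and ms: "\<And>i. i < n \<Longrightarrow> ms ! i = orb_map G (objs ! i) (objs ! Suc i) (g i)"
    and comp: "orb_chain_comp G x ms = orb_map G x y (left_prod G g n)"
    using orb_chainE[OF chain] unfolding n_def by metis
  obtain g' where H': "conj_chain G (length ms') ((!) objs') g'"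
    and ms': "\<And>i. i < length ms' \<Longrightarrow> ms' ! i = orb_map G (objs' ! i) (objs' ! Suc i) (g' i)"
    and comp': "orb_chain_comp G x ms' = orb_map G x y (left_prod G g' (length ms'))"
    using orb_chainE[OF chain'] by metis
  have ends: "length objs = Suc n" "objs ! 0 = x" "objs ! n = y" "objs' ! 0 = x" "objs' ! length ms' = y"
    using chain chain' unfolding orb_chain_def n_def by auto
  have x: "subgroup x G" and y: "subgroup y G" "finite y"
    using \<open>x \<in> F\<close> \<open>y \<in> F\<close> family_subgroup family_finite by auto
  obtain p k where p: "Factorial_Ring.prime p" "card y = p ^ k"
    using cpp[OF \<open>y \<in> F\<close>] unfolding cyclic_prime_power_def by blast
  have same_length: "length ms' = n"
    using orb_chains_same_length[OF cpp chain chain' \<open>x \<in> F\<close> \<open>y \<in> F\<close>] unfolding n_def .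
  have u: "left_prod G g' n \<otimes> inv (left_prod G g n) \<in> y"
    using same_comp comp comp' orb_map_eq_iff[OF x y(1)] same_length ends
      conj_chain_left_prod_closed[OF H, of n] conj_chain_left_prod_closed[OF H', of n]
      conj_chain_left_prod[OF H, of 0 n] conj_chain_left_prod[OF H', of 0 n] by simp
  obtain z where z: "z \<in> y" "y = generate G {z}"
    using cyclic_subgroupE[OF y(1)] cpp[OF \<open>y \<in> F\<close>] unfolding cyclic_prime_power_def by blast
  have "conj_set G (left_prod G g' i \<otimes> inv (left_prod G g i)) (objs ! i) = objs' ! i"
    if "i \<le> n" for i
    using conj_chains_conjugate[OF H H'[unfolded same_length] subgroup.mem_carrier[OF y(1) z(1)]]
      card_orb_chain[OF cpp chain p] card_orb_chain[OF cpp chain' p] u z(2) y(2) ends same_length that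
    unfolding n_def by simp
  then show "length ms = length ms' \<and>
       (\<exists>hs. length hs = length objs \<and> hs ! 0 = orb_id G x \<and> hs ! length ms = orb_id G y \<and>
             (\<forall>i\<le>length ms. orb_iso G (objs ! i) (objs' ! i) (hs ! i)) \<and>
             (\<forall>i<length ms. orb_comp G (objs ! i) (ms' ! i) (hs ! i) =
                            orb_comp G (objs ! i) (hs ! Suc i) (ms ! i)))"
    using conj_chains_orb_isos[OF H H'[unfolded same_length] ends(1) ms ms'[unfolded same_length]]
      u same_length ends unfolding n_def by auto
qed

lemma orb_chain_of_maximal_chain:
  assumes chain: "maximal_chain G objs" and len: "length objs = Suc m" and top: "objs ! m \<in> F"
  defines "ms \<equiv> map (\<lambda>i. orb_map G (objs ! i) (objs ! Suc i) \<one>) [0..<m]"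
  shows "orb_chain G F (objs ! 0) (objs ! m) objs ms"
    and "orb_chain_comp G (objs ! 0) ms = orb_map G (objs ! 0) (objs ! m) \<one>"
proof -
  have max: "maximal_subgroup G (objs ! i) (objs ! Suc i)" if "i < m" for i
    using chain len that unfolding maximal_chain_def by simp
  have inF: "objs ! i \<in> F" if "i \<le> m" for i
  proof (cases "i = m")
    case False
    then have "subgroup (objs ! i) G"
      using max[of i] that unfolding maximal_subgroup_def by simp
    then show ?thesis
      using family_subgroup_closed[OF top] maximal_chain_mono[OF chain that] len by simp
  qed (use top in simp)
  have ms: "length ms = m" "\<And>i. i < m \<Longrightarrow> ms ! i = orb_map G (objs ! i) (objs ! Suc i) \<one>"
    unfolding ms_def by simp_all
  show "orb_chain G F (objs ! 0) (objs ! m) objs ms"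
    unfolding orb_chain_def using len ms maximal_imp_unfactorisable inF max
    by (auto simp: in_set_conv_nth less_Suc_eq_le)
  have "conj_chain G m ((!) objs) (\<lambda>_. \<one>)"
    unfolding conj_chain_def
  proof (intro conjI allI impI one_closed)
    show "subgroup (objs ! i) G" if "i \<le> m" for i
      using inF family_subgroup that by blast
    show "conj_set G \<one> (objs ! i) \<subseteq> objs ! Suc i" if "i < m" for i
      using max[OF that] conj_set_one[OF subgroup.subset] unfolding maximal_subgroup_def by auto
  qed
  moreover have "left_prod G (\<lambda>_. \<one>) m = \<one>"
    by (induction m) simp_all
  ultimately show "orb_chain_comp G (objs ! 0) ms = orb_map G (objs ! 0) (objs ! m) \<one>"
    using orb_chain_comp_orb_map ms by metis
qed

lemma orbit_category_ufpD:
  assumes "orbit_category_ufp G F" "x \<in> F" "y \<in> F"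
    and "orb_chain G F x y objs ms" "orb_chain G F x y objs' ms'"
    and "orb_chain_comp G x ms = orb_chain_comp G x ms'"
  obtains hs where "length ms = length ms'" "hs ! 0 = orb_id G x"
    "\<And>i. i \<le> length ms \<Longrightarrow> orb_iso G (objs ! i) (objs' ! i) (hs ! i)"
    "\<And>i. i < length ms \<Longrightarrow>
       orb_comp G (objs ! i) (ms' ! i) (hs ! i) = orb_comp G (objs ! i) (hs ! Suc i) (ms ! i)"
  using assms unfolding orbit_category_ufp_def by blast

lemma ufp_maximal_chains_eq:
  assumes ufp: "orbit_category_ufp G F"
    and chains: "maximal_chain G objs" "maximal_chain G objs'"
    and len: "length objs = Suc m" "length objs' = Suc m'"
    and ends: "objs' ! 0 = objs ! 0" "objs' ! m' = objs ! m" and top: "objs ! m \<in> F"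
  shows "objs = objs'"
proof -
  let ?ms = "map (\<lambda>i. orb_map G (objs ! i) (objs ! Suc i) \<one>) [0..<m]"
  let ?ms' = "map (\<lambda>i. orb_map G (objs' ! i) (objs' ! Suc i) \<one>) [0..<m']"
  note chain = orb_chain_of_maximal_chain[OF chains(1) len(1) top]
  have "objs' ! m' \<in> F"
    using ends top by simp
  note chain' = orb_chain_of_maximal_chain[OF chains(2) len(2) this, unfolded ends]
  have bottom: "objs ! 0 \<in> F"
    using chain(1) unfolding orb_chain_def by (auto intro: nth_mem)
  obtain hs where "length ?ms = length ?ms'" and h0: "hs ! 0 = orb_id G (objs ! 0)"
    and iso: "\<And>i. i \<le> length ?ms \<Longrightarrow> orb_iso G (objs ! i) (objs' ! i) (hs ! i)"
    and comm: "\<And>i. i < length ?ms \<Longrightarrow>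
      orb_comp G (objs ! i) (?ms' ! i) (hs ! i) = orb_comp G (objs ! i) (hs ! Suc i) (?ms ! i)"
    using orbit_category_ufpD[OF ufp bottom top chain(1) chain'(1) trans[OF chain(2) chain'(2)[symmetric]]]
    by blast
  then have "m = m'"
    by simp
  have "set objs \<subseteq> F" "set objs' \<subseteq> F"
    using chain(1) chain'(1) unfolding orb_chain_def by auto
  then have sub: "subgroup (objs ! i) G" "subgroup (objs' ! i) G" if "i \<le> m" for i
    using family_subgroup nth_mem len that \<open>m = m'\<close> by (metis le_imp_less_Suc subsetD)+
  moreover have "objs ! i \<subseteq> objs ! Suc i" "objs' ! i \<subseteq> objs' ! Suc i" if "i < m" for i
    using maximal_chain_mono chains len that \<open>m = m'\<close> by auto
  ultimately have "(hs ! i) (objs ! i) = objs' ! i" if "i \<le> m" for i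
    using inclusion_ladder_base_cosets[of m objs objs' hs] h0 ends comm that \<open>m = m'\<close>
      subgroup_in_coset_space[OF sub(1), of 0] by (simp add: orb_id_def)
  then have "objs ! i = objs' ! i" if "i \<le> m" for i
    using eq_of_orb_iso_base[OF sub[OF that] iso] that by simp
  then show ?thesis
    using len \<open>m = m'\<close> by (intro nth_equalityI) auto
qed

lemma cyclic_prime_power_if_orbit_category_ufp:
  assumes ufp: "orbit_category_ufp G F" and KF: "K \<in> F"
  shows "cyclic_prime_power G K"
proof (rule ccontr)
  assume "\<not> cyclic_prime_power G K"
  then obtain M M' where M: "maximal_subgroup G M K" "maximal_subgroup G M' K" "M \<noteq> M'"
    using two_maximal_subgroups family_subgroup[OF KF] family_finite[OF KF] by blast
  obtain objs objs' where chains: "maximal_chain G (objs @ [M, K])" "maximal_chain G (objs' @ [M', K])"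
    and "(objs @ [M, K]) ! 0 = {\<one>}" "(objs' @ [M', K]) ! 0 = {\<one>}"
    using exists_maximal_chain_to[OF M(1)] exists_maximal_chain_to[OF M(2)] family_finite[OF KF] by blast
  then have "objs @ [M, K] = objs' @ [M', K]"
    using ufp_maximal_chains_eq[OF ufp chains(2) chains(1), of "Suc (length objs')" "Suc (length objs)"] KF
    by (simp add: nth_append)
  then have "length objs = length objs'" and "M = (objs' @ [M', K]) ! length objs"
    using arg_cong[of _ _ length] by (auto simp: nth_append)
  then show False
    using M(3) by simp
qed

end

theorem proposition6p33:
  fixes G :: "('g, 'b) monoid_scheme" and F :: "'g set set"
  assumes "group G"
    and "subgroup_family G F"
    and "\<forall>H\<in>F. finite H"
  shows "orbit_category_ufp G F \<longleftrightarrow>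
         (\<forall>H\<in>F. cyclic_group (G\<lparr>carrier := H\<rparr>) \<and>
                 (\<exists>p k. Factorial_Ring.prime (p::nat) \<and> card H = p ^ k))"
proof -
  interpret finite_subgroup_family G F
    using assms unfolding finite_subgroup_family_def finite_subgroup_family_axioms_def subgroup_family_def
    by blast
  show ?thesis
    using orbit_category_ufp_if_cyclic_prime_power cyclic_prime_power_if_orbit_category_ufp
    unfolding cyclic_prime_power_def by blast
qed

end
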